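(* Suppose the following statement (A) holds: (A) There are absolute constants $t,k_0$ such that for every integer $k\ge k_0$ and every constant $c>0$ there is $n_0$ such that for all $n\ge n_0$, every graph on $n$ vertices with at least $c\,n^{3/2}$ edges contains (as a subgraph) a copy of some graph $H\in\mathcal{H}_{k,t}$. Then the following statement (B) holds: (B) There is an absolute constant $d$ such that for every integer $e\ge 3$ and every constant $c>0$ there is $n_0$ such that for all $n\ge n_0$, every $3$-uniform hypergraph on $n$ vertices with at least $c\,n^2$ hyperedges contains an $(e+d,e)$-configuration.
   Context: A $3$-uniform hypergraph ($3$-graph) is a set of vertices together with a set of $3$-element subsets (hyperedges). An $(v,e)$-configuration in a $3$-graph is a set of $e$ hyperedges whose union has at most $v$ vertices. A graph $H$ is $2$-degenerate if its vertices can be ordered $v_1,\dots,v_k$ so that each $v_i$ has at most $2$ neighbours among $v_1,\dots,v_{i-1}$. For integers $k,t$, $\mathcal{H}_{k,t}$ denotes the family of $2$-degenerate graphs on $k$ vertices with exactly $2k-t$ edges. *)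

theory Defs
  imports Complex_Main
begin

definition graph_on :: "'a set \<Rightarrow> 'a set set \<Rightarrow> bool" where
  "graph_on V E \<longleftrightarrow> (\<forall>e\<in>E. e \<subseteq> V \<and> card e = 2)"

definition two_degenerate :: "'a set \<Rightarrow> 'a set set \<Rightarrow> bool" where
  "two_degenerate V E \<longleftrightarrow>
     (\<exists>\<sigma>. bij_betw \<sigma> {..<card V} V \<and>
        (\<forall>i<card V. card {j. j < i \<and> {\<sigma> i, \<sigma> j} \<in> E} \<le> 2))"

definition H_family :: "nat \<Rightarrow> int \<Rightarrow> nat set set set" where
  "H_family k t = {E. graph_on {..<k} E \<and> two_degenerate {..<k} E \<and>
                      int (card E) = 2 * int k - t}"

definition contains_copy :: "'b set \<Rightarrow> 'b set set \<Rightarrow> 'a set \<Rightarrow> 'a set set \<Rightarrow> bool" where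
  "contains_copy W F V E \<longleftrightarrow>
     (\<exists>f. inj_on f W \<and> f ` W \<subseteq> V \<and> (\<forall>e\<in>F. f ` e \<in> E))"

definition hypergraph3_on :: "'a set \<Rightarrow> 'a set set \<Rightarrow> bool" where
  "hypergraph3_on V E \<longleftrightarrow> (\<forall>e\<in>E. e \<subseteq> V \<and> card e = 3)"

definition has_configuration :: "'a set set \<Rightarrow> nat \<Rightarrow> nat \<Rightarrow> bool" where
  "has_configuration E v e \<longleftrightarrow>
     (\<exists>F\<subseteq>E. card F = e \<and> card (\<Union>F) \<le> v)"

definition statement_A :: bool where
  "statement_A \<longleftrightarrow>
    (\<exists>(t::int) (k0::nat). \<forall>k\<ge>k0. \<forall>c::real>0. \<exists>n0::nat. \<forall>n\<ge>n0.
       \<forall>E::nat set set. graph_on {..<n} E \<and> real (card E) \<ge> c * real n powr (3/2) \<longrightarrow>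
         (\<exists>H\<in>H_family k t. contains_copy {..<k} H {..<n} E))"

definition statement_B :: bool where
  "statement_B \<longleftrightarrow>
    (\<exists>d::nat. \<forall>e::nat\<ge>3. \<forall>c::real>0. \<exists>n0::nat. \<forall>n\<ge>n0.
       \<forall>E::nat set set. hypergraph3_on {..<n} E \<and> real (card E) \<ge> c * (real n)^2 \<longrightarrow>
         has_configuration E (e + d) e)"

end

(* If some pair of vertices lies in e hyperedges, these form an (e + 2, e)-configuration.
   Otherwise a maximal linear subhypergraph keeps a 1/(3e) fraction of the hyperedges, so we
   may assume the 3-graph is linear with gamma n^2 hyperedges. On the n^2 ordered pairs of
   vertices build a graph: two distinct hyperedges {a, c, x} and {b, d, x} through a common
   vertex x give the edge (a, b)(c, d). Linearity makes this assignment injective, and by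
   Cauchy-Schwarz there are at least gamma^2 (n^2)^(3/2) edges, so (A) yields a copy of a
   2-degenerate H with k >= (e + t)^2 vertices and 2k - t edges. Each edge of the copy comes
   with two hyperedges. Adding the vertices of H in degeneracy order, a vertex with j earlier
   neighbours creates at most 2 - j more new hypergraph vertices than new hyperedges, so the
   hyperedges found span at most t more vertices than their number; as the k pairs are
   distinct, there are at least e of them. Stopping as soon as e hyperedges are collected
   gives an (e + t + 3, e)-configuration. *)

theory Submission
  imports Defs "HOL-Analysis.Convex"
begin

section \<open>Linear subhypergraphs\<close>

definition linear_hypergraph :: "'a set set \<Rightarrow> bool" where
  "linear_hypergraph E \<longleftrightarrow> (\<forall>T1\<in>E. \<forall>T2\<in>E. T1 \<noteq> T2 \<longrightarrow> card (T1 \<inter> T2) \<le> 1)"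

definition codegree :: "'a set set \<Rightarrow> 'a \<Rightarrow> 'a \<Rightarrow> nat" where
  "codegree E p q = card {T\<in>E. {p, q} \<subseteq> T}"

lemma card_3_distinct: "card {p, q, r} = 3 \<Longrightarrow> p \<noteq> q \<and> q \<noteq> r \<and> p \<noteq> r"
  by (auto simp: card_insert_if split: if_splits)

lemma linear_hypergraph_eqI:
  assumes "linear_hypergraph E" "T1 \<in> E" "T2 \<in> E" "finite T1"
    and "p \<noteq> q" "{p, q} \<subseteq> T1" "{p, q} \<subseteq> T2"
  shows "T1 = T2"
proof (rule ccontr)
  assume "T1 \<noteq> T2"
  then have "card (T1 \<inter> T2) \<le> 1"
    using assms(1-3) unfolding linear_hypergraph_def by blast
  moreover have "card {p, q} \<le> card (T1 \<inter> T2)"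
    using assms(4,6,7) by (intro card_mono) auto
  ultimately show False
    using assms(5) by simp
qed

lemma linear_hypergraph_third_vertex_eq:
  assumes "linear_hypergraph E" "{a, p, x} \<in> E" "{a, q, x} \<in> E" "card {a, p, x} = 3"
  shows "p = q"
proof -
  have "{a, p, x} = {a, q, x}"
    using card_3_distinct[OF assms(4)]
    by (intro linear_hypergraph_eqI[OF assms(1-3), of a x]) auto
  then have "p \<in> {a, q, x}"
    by blast
  then show ?thesis
    using card_3_distinct[OF assms(4)] by blast
qed

lemma has_configuration_mono:
  assumes "has_configuration E v e" "E \<subseteq> E'" "v \<le> v'"
  shows "has_configuration E' v' e"
  using assms unfolding has_configuration_def by (blast intro: order_trans)

lemma has_configuration_codegree:
  assumes triples: "\<And>T. T \<in> E \<Longrightarrow> card T = 3" and "p \<noteq> q" and "e \<le> codegree E p q"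
  shows "has_configuration E (e + 2) e"
proof -
  obtain F where F: "F \<subseteq> {T\<in>E. {p, q} \<subseteq> T}" "card F = e" "finite F"
    using assms(3) unfolding codegree_def by (rule obtain_subset_with_card_n)
  have triple: "card T = 3" "{p, q} \<subseteq> T" "finite T" if "T \<in> F" for T
    using that F(1) triples[of T] by (auto simp: card_ge_0_finite)
  have card_rest: "card (T - {p, q}) = 1" if "T \<in> F" for T
    using triple[OF that] \<open>p \<noteq> q\<close> by (simp add: card_Diff_subset)
  have finite_rest: "finite (\<Union>T\<in>F. T - {p, q})"
    using F(3) triple by simp
  have "card (\<Union>F) \<le> card ({p, q} \<union> (\<Union>T\<in>F. T - {p, q}))"
    using finite_rest by (intro card_mono) auto
  also have "\<dots> \<le> card {p, q} + card (\<Union>T\<in>F. T - {p, q})"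
    by (rule card_Un_le)
  also have "card (\<Union>T\<in>F. T - {p, q}) \<le> (\<Sum>T\<in>F. card (T - {p, q}))"
    by (rule card_UN_le[OF F(3)])
  also have "\<dots> = e"
    using card_rest F(2) by simp
  finally have "card (\<Union>F) \<le> e + 2"
    using \<open>p \<noteq> q\<close> by simp
  then show ?thesis
    using F unfolding has_configuration_def by blast
qed

lemma two_of_three_subset:
  assumes "2 \<le> card (T \<inter> {a, b, c})"
  shows "{a, b} \<subseteq> T \<or> {b, c} \<subseteq> T \<or> {a, c} \<subseteq> T"
proof -
  have "\<not> card (T \<inter> {a, b, c}) \<le> Suc 0"
    using assms by simp
  then obtain u v where "u \<in> T \<inter> {a, b, c}" "v \<in> T \<inter> {a, b, c}" "u \<noteq> v"
    by (auto simp: card_le_Suc0_iff_eq)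
  then show ?thesis
    by auto
qed

lemma card_sharing_pair_le:
  assumes "finite E" "card T' = 3" and codegree: "\<And>p q. p \<noteq> q \<Longrightarrow> codegree E p q \<le> e"
  shows "card {T\<in>E. 2 \<le> card (T \<inter> T')} \<le> 3 * e"
proof -
  obtain a b c where T': "T' = {a, b, c}" "a \<noteq> b" "b \<noteq> c" "a \<noteq> c"
    using assms(2) unfolding card_3_iff by blast
  let ?X = "\<lambda>p q. {T\<in>E. {p, q} \<subseteq> T}"
  have "{T\<in>E. 2 \<le> card (T \<inter> T')} \<subseteq> ?X a b \<union> ?X b c \<union> ?X a c"
    unfolding T'(1) by (auto dest: two_of_three_subset)
  then have "card {T\<in>E. 2 \<le> card (T \<inter> T')} \<le> card (?X a b \<union> ?X b c \<union> ?X a c)"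
    using \<open>finite E\<close> by (intro card_mono) auto
  also have "\<dots> \<le> codegree E a b + codegree E b c + codegree E a c"
    unfolding codegree_def by (rule order_trans[OF card_Un_le add_right_mono[OF card_Un_le]])
  also have "\<dots> \<le> 3 * e"
    using codegree[OF T'(2)] codegree[OF T'(3)] codegree[OF T'(4)] by linarith
  finally show ?thesis .
qed

lemma exists_large_linear_subhypergraph:
  assumes "finite E" and triples: "\<And>T. T \<in> E \<Longrightarrow> card T = 3"
    and codegree: "\<And>p q. p \<noteq> q \<Longrightarrow> codegree E p q \<le> e"
  shows "\<exists>M\<subseteq>E. linear_hypergraph M \<and> card E \<le> 3 * e * card M"
proof -
  let ?L = "{M. M \<subseteq> E \<and> linear_hypergraph M}"
  have "finite ?L"
    by (rule finite_subset[of _ "Pow E"]) (use \<open>finite E\<close> in auto)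
  moreover have "?L \<noteq> {}"
    by (auto simp: linear_hypergraph_def intro!: exI[of _ "{}"])
  ultimately have "\<exists>M\<in>?L. \<forall>M'\<in>?L. M \<subseteq> M' \<longrightarrow> M = M'"
    by (rule finite_has_maximal)
  then obtain M where "M \<in> ?L" and maximal: "\<forall>M'\<in>?L. M \<subseteq> M' \<longrightarrow> M = M'"
    by blast
  from \<open>M \<in> ?L\<close> have M: "M \<subseteq> E" "linear_hypergraph M"
    by simp_all
  let ?N = "\<lambda>T'. {T\<in>E. 2 \<le> card (T \<inter> T')}"
  have "E \<subseteq> (\<Union>T'\<in>M. ?N T')"
  proof
    fix T assume "T \<in> E"
    show "T \<in> (\<Union>T'\<in>M. ?N T')"
    proof (cases "T \<in> M")
      case True
      then show ?thesis
        using \<open>T \<in> E\<close> triples by force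
    next
      case False
      then have "\<not> linear_hypergraph (insert T M)"
        using maximal M(1) \<open>T \<in> E\<close> by blast
      then obtain T' where "T' \<in> M" "\<not> card (T \<inter> T') \<le> 1"
        using M(2) unfolding linear_hypergraph_def by (metis Int_commute insertE)
      then have "2 \<le> card (T \<inter> T')"
        by linarith
      then show ?thesis
        using \<open>T' \<in> M\<close> \<open>T \<in> E\<close> by blast
    qed
  qed
  then have "card E \<le> card (\<Union>T'\<in>M. ?N T')"
    using \<open>finite E\<close> M(1) by (intro card_mono) (auto intro: finite_subset)
  also have "\<dots> \<le> (\<Sum>T'\<in>M. card (?N T'))"
    by (rule card_UN_le) (use \<open>finite E\<close> M(1) finite_subset in blast)
  also have "\<dots> \<le> (\<Sum>T'\<in>M. 3 * e)"
    using M(1) triples \<open>finite E\<close> codegree by (intro sum_mono card_sharing_pair_le) auto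
  finally show ?thesis
    using M by (auto simp: mult.commute)
qed

section \<open>Vertices spanned by an embedded degenerate graph\<close>

lemma has_configuration_of_chain:
  fixes F :: "nat \<Rightarrow> 'a set set"
  assumes "F 0 = {}"
    and chain: "\<And>i. i < k \<Longrightarrow> F i \<subseteq> F (Suc i)"
    and growth: "\<And>i. i < k \<Longrightarrow> card (F (Suc i)) \<le> card (F i) + g"
    and finite: "\<And>i. i \<le> k \<Longrightarrow> finite (\<Union>(F i))"
    and excess: "\<And>i. i \<le> k \<Longrightarrow> card (\<Union>(F i)) \<le> card (F i) + s"
    and "e \<le> card (F k)"
  shows "has_configuration (F k) (e + s + g - 1) e"
proof -
  have "has_configuration (F i) (e + s + g - 1) e" if "i \<le> k" "e \<le> card (F i)" for i
    using that
  proof (induction i)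
    case 0
    then show ?case
      using \<open>F 0 = {}\<close> by (simp add: has_configuration_def)
  next
    case (Suc i)
    have sub: "F i \<subseteq> F (Suc i)" and fin: "finite (F (Suc i))" "finite (\<Union>(F (Suc i)))"
      using chain finite[of "Suc i"] Suc.prems(1) by (auto dest: finite_UnionD)
    show ?case
    proof (cases "e \<le> card (F i)")
      case True
      then show ?thesis
        using Suc sub by (auto intro: has_configuration_mono)
    next
      case False
      have "e - card (F i) \<le> card (F (Suc i) - F i)"
        using Suc.prems(2) sub fin(1) by (simp add: card_Diff_subset finite_subset)
      then obtain S where S: "S \<subseteq> F (Suc i) - F i" "card S = e - card (F i)"
        by (meson obtain_subset_with_card_n)
      have "card (F i \<union> S) = e"
        using S False sub fin(1) by (subst card_Un_disjoint) (auto intro: finite_subset)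
      moreover have "card (\<Union>(F i \<union> S)) \<le> card (\<Union>(F (Suc i)))"
        using S sub fin(2) by (intro card_mono) auto
      moreover have "card (\<Union>(F (Suc i))) \<le> card (F i) + g + s"
        using excess[of "Suc i"] growth[of i] Suc.prems(1) by simp
      ultimately show ?thesis
        using S sub False unfolding has_configuration_def
        by (intro exI[of _ "F i \<union> S"]) auto
    qed
  qed
  then show ?thesis
    using \<open>e \<le> card (F k)\<close> by simp
qed

lemma card_Un_eq_card_add_card_Diff:
  assumes "finite A" "finite B"
  shows "card (A \<union> B) = card A + card (B - A)"
  using assms by (subst Un_Diff_cancel[symmetric]) (rule card_Un_disjoint, auto)

lemma card_le_2_cases:
  assumes "finite A" "card A \<le> 2"
  obtains "A = {}" | a where "A = {a}" | a b where "a \<noteq> b" "A = {a, b}"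
proof -
  have "card A = 0 \<or> card A = 1 \<or> card A = 2"
    using assms(2) by linarith
  then show ?thesis
    using assms(1) that by (auto simp: card_1_singleton_iff card_2_iff)
qed

text \<open>Each new vertex \<open>v\<close> is charged to a new edge \<open>g v\<close>; two new vertices with the same
  edge would be each other's successors under \<open>nxt\<close>.\<close>

lemma card_new_vertices_le_card_new_edges:
  assumes "finite U" "finite D" "finite F" "finite S" "\<Union>F \<subseteq> U"
    and covered: "\<And>v. v \<in> D - U \<Longrightarrow> v \<in> g v \<and> g v \<in> S \<and> g v - U \<subseteq> {v, nxt v}"
    and no_2cycle: "\<And>v. v \<in> D - U \<Longrightarrow> nxt (nxt v) \<noteq> v"
  shows "card (U \<union> D) + card F \<le> card U + card (F \<union> S)"
proof -
  have "inj_on g (D - U)"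
  proof (rule inj_onI, rule ccontr)
    fix v w assume v: "v \<in> D - U" and w: "w \<in> D - U" and "g v = g w" "v \<noteq> w"
    then have "w = nxt v" "v = nxt w"
      using covered[OF v] covered[OF w] by auto
    then show False
      using no_2cycle[OF v] by simp
  qed
  moreover have "g ` (D - U) \<subseteq> S - F"
    using covered \<open>\<Union>F \<subseteq> U\<close> by blast
  ultimately have "card (D - U) \<le> card (S - F)"
    using \<open>finite S\<close> by (intro card_inj_on_le) auto
  then show ?thesis
    using assms(1-4) by (simp add: card_Un_eq_card_add_card_Diff)
qed

text \<open>Vertex \<open>j\<close> of a graph, listed in degeneracy order, is mapped to the pair
  \<open>(\<alpha> j, \<beta> j)\<close> of hypergraph vertices, and \<open>B j\<close> is the set of its earlier neighbours.\<close>

locale pair_embedding =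
  fixes E :: "'a set set" and k :: nat and B :: "nat \<Rightarrow> nat set"
    and \<alpha> \<beta> :: "nat \<Rightarrow> 'a" and x :: "nat \<Rightarrow> nat \<Rightarrow> 'a"
  assumes linear: "linear_hypergraph E"
    and card_edge: "\<And>T. T \<in> E \<Longrightarrow> card T = 3"
    and B_less: "\<And>j. B j \<subseteq> {..<j}"
    and card_B: "\<And>j. j < k \<Longrightarrow> card (B j) \<le> 2"
    and edge_\<alpha>: "\<And>j l. j < k \<Longrightarrow> l \<in> B j \<Longrightarrow> {\<alpha> j, \<alpha> l, x j l} \<in> E"
    and edge_\<beta>: "\<And>j l. j < k \<Longrightarrow> l \<in> B j \<Longrightarrow> {\<beta> j, \<beta> l, x j l} \<in> E"
    and edges_differ: "\<And>j l. j < k \<Longrightarrow> l \<in> B j \<Longrightarrow> {\<alpha> j, \<alpha> l, x j l} \<noteq> {\<beta> j, \<beta> l, x j l}"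
    and pairs_inj: "\<And>j l. j < k \<Longrightarrow> l < k \<Longrightarrow> \<alpha> j = \<alpha> l \<Longrightarrow> \<beta> j = \<beta> l \<Longrightarrow> j = l"
begin

definition verts :: "nat \<Rightarrow> 'a set" where
  "verts i = (\<Union>j<i. {\<alpha> j, \<beta> j} \<union> x j ` B j)"

definition triples :: "nat \<Rightarrow> 'a set set" where
  "triples i = (\<Union>j<i. \<Union>l\<in>B j. {{\<alpha> j, \<alpha> l, x j l}, {\<beta> j, \<beta> l, x j l}})"

lemma finite_B: "finite (B j)"
  using B_less finite_subset by blast

lemma finite_verts: "finite (verts i)"
  by (simp add: verts_def finite_B)

lemma finite_triples: "finite (triples i)"
  by (simp add: triples_def finite_B)

lemma verts_Suc: "verts (Suc i) = verts i \<union> ({\<alpha> i, \<beta> i} \<union> x i ` B i)"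
  by (simp add: verts_def lessThan_Suc Un_commute)

lemma triples_Suc:
  "triples (Suc i) = triples i \<union> (\<Union>l\<in>B i. {{\<alpha> i, \<alpha> l, x i l}, {\<beta> i, \<beta> l, x i l}})"
  by (simp add: triples_def lessThan_Suc Un_commute)

lemma earlier_in_verts: "l \<in> B i \<Longrightarrow> \<alpha> l \<in> verts i \<and> \<beta> l \<in> verts i"
  using B_less unfolding verts_def by blast

lemma Union_triples_subset: "\<Union>(triples i) \<subseteq> verts i"
proof -
  have "l < i" if "j < i" "l \<in> B j" for j l
    using that B_less by force
  then show ?thesis
    unfolding triples_def verts_def by blast
qed

lemma triples_subset: "i \<le> k \<Longrightarrow> triples i \<subseteq> E"
  unfolding triples_def using edge_\<alpha> edge_\<beta> by force

lemma card_triples_Suc_le: "i < k \<Longrightarrow> card (triples (Suc i)) \<le> card (triples i) + 4"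
proof -
  assume "i < k"
  let ?new = "\<Union>l\<in>B i. {{\<alpha> i, \<alpha> l, x i l}, {\<beta> i, \<beta> l, x i l}}"
  have "card ?new \<le> (\<Sum>l\<in>B i. card {{\<alpha> i, \<alpha> l, x i l}, {\<beta> i, \<beta> l, x i l}})"
    by (rule card_UN_le[OF finite_B])
  also have "\<dots> \<le> (\<Sum>l\<in>B i. 2)"
    by (intro sum_mono) (simp add: card_insert_if)
  also have "\<dots> \<le> 4"
    using card_B[OF \<open>i < k\<close>] by simp
  finally show ?thesis
    unfolding triples_Suc using card_Un_le[of "triples i" ?new] by linarith
qed

lemma alpha_neq_beta:
  assumes "i < k" "l \<in> B i"
  shows "\<alpha> i \<noteq> \<beta> i"
proof
  assume "\<alpha> i = \<beta> i"
  have card: "card {\<alpha> i, \<alpha> l, x i l} = 3"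
    using card_edge edge_\<alpha>[OF assms] by blast
  then have "{\<alpha> i, \<alpha> l, x i l} = {\<beta> i, \<beta> l, x i l}"
    using edge_\<alpha>[OF assms] edge_\<beta>[OF assms] \<open>\<alpha> i = \<beta> i\<close> card_3_distinct[OF card]
    by (intro linear_hypergraph_eqI[OF linear, of _ _ "\<alpha> i" "x i l"]) (auto simp: card_ge_0_finite)
  with edges_differ[OF assms] show False ..
qed

lemma x_inj:
  assumes "i < k" "l1 \<in> B i" "l2 \<in> B i" "x i l1 = x i l2"
  shows "l1 = l2"
proof -
  have "\<alpha> l1 = \<alpha> l2"
    using edge_\<alpha>[OF assms(1,2)] edge_\<alpha>[OF assms(1,3)] assms(4) card_edge
    by (intro linear_hypergraph_third_vertex_eq[OF linear]) auto
  moreover have "\<beta> l1 = \<beta> l2"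
    using edge_\<beta>[OF assms(1,2)] edge_\<beta>[OF assms(1,3)] assms(4) card_edge
    by (intro linear_hypergraph_third_vertex_eq[OF linear]) auto
  moreover have "l1 < k" "l2 < k"
    using assms(1-3) B_less by force+
  ultimately show ?thesis
    using pairs_inj by blast
qed

lemma card_verts_Suc:
  assumes "i < k"
  shows "card (verts (Suc i)) + card (B i) + card (triples i) \<le>
    card (verts i) + card (triples (Suc i)) + 2"
proof -
  let ?a = "\<alpha> i" and ?b = "\<beta> i"
  note fin = finite_verts[of i] finite_triples[of i] Union_triples_subset[of i]
  have triple: "card {?a, \<alpha> l, x i l} = 3" "card {?b, \<beta> l, x i l} = 3" if "l \<in> B i" for l
    using card_edge edge_\<alpha>[OF assms that] edge_\<beta>[OF assms that] by blast+
  consider "B i = {}" | l where "B i = {l}" | l1 l2 where "l1 \<noteq> l2" "B i = {l1, l2}"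
    using card_le_2_cases[OF finite_B card_B[OF assms]] by metis
  then show ?thesis
  proof cases
    case 1
    have "card {?a, ?b} \<le> 2"
      by (simp add: card_insert_if)
    then have "card (verts i \<union> {?a, ?b}) \<le> card (verts i) + 2"
      using card_Un_le[of "verts i" "{?a, ?b}"] by linarith
    then show ?thesis
      unfolding verts_Suc triples_Suc 1 by simp
  next
    case 2
    then have l: "l \<in> B i"
      by simp
    let ?y = "x i l"
    let ?T1 = "{?a, \<alpha> l, ?y}" and ?T2 = "{?b, \<beta> l, ?y}"
    note distinct = card_3_distinct[OF triple(1)[OF l]] card_3_distinct[OF triple(2)[OF l]]
      alpha_neq_beta[OF assms l]
    have "card (verts i \<union> {?a, ?y}) + card (triples i) \<le> card (verts i) + card (triples i \<union> {?T1, ?T2})"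
      using fin earlier_in_verts[OF l] distinct
      by (intro card_new_vertices_le_card_new_edges[where g = "\<lambda>v. if v = ?a then ?T1 else ?T2"
            and nxt = "\<lambda>v. if v = ?a then ?y else ?b"]) auto
    moreover have "verts i \<union> {?a, ?b, ?y} = insert ?b (verts i \<union> {?a, ?y})"
      by auto
    then have "card (verts i \<union> {?a, ?b, ?y}) \<le> card (verts i \<union> {?a, ?y}) + 1"
      using fin(1) by (simp add: card_insert_if)
    ultimately show ?thesis
      unfolding verts_Suc triples_Suc 2 by (simp add: insert_commute)
  next
    case 3
    then have l: "l1 \<in> B i" "l2 \<in> B i"
      by simp_all
    let ?y1 = "x i l1" and ?y2 = "x i l2"
    let ?T1 = "{?a, \<alpha> l1, ?y1}" and ?T2 = "{?b, \<beta> l1, ?y1}"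
      and ?T3 = "{?b, \<beta> l2, ?y2}" and ?T4 = "{?a, \<alpha> l2, ?y2}"
    note distinct = card_3_distinct[OF triple(1)[OF l(1)]] card_3_distinct[OF triple(2)[OF l(1)]]
      card_3_distinct[OF triple(1)[OF l(2)]] card_3_distinct[OF triple(2)[OF l(2)]]
      alpha_neq_beta[OF assms l(1)] x_inj[OF assms l] \<open>l1 \<noteq> l2\<close>
    \<comment> \<open>The new vertices lie on the cycle a, y1, b, y2, and each is charged to the new triple
      leading to its successor on the cycle.\<close>
    have "card (verts i \<union> {?a, ?y1, ?b, ?y2}) + card (triples i) \<le>
        card (verts i) + card (triples i \<union> {?T1, ?T2, ?T3, ?T4})"
      using fin earlier_in_verts[OF l(1)] earlier_in_verts[OF l(2)] distinct
      by (intro card_new_vertices_le_card_new_edges[where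
            g = "\<lambda>v. if v = ?a then ?T1 else if v = ?y1 then ?T2 else if v = ?b then ?T3 else ?T4"
            and nxt = "\<lambda>v. if v = ?a then ?y1 else if v = ?y1 then ?b else if v = ?b then ?y2 else ?a"])
        auto
    moreover have "card (B i) = 2"
      using 3 by simp
    ultimately show ?thesis
      unfolding verts_Suc triples_Suc 3(2) by (simp add: insert_commute)
  qed
qed

lemma card_verts_le: "i \<le> k \<Longrightarrow> card (verts i) + (\<Sum>j<i. card (B j)) \<le> card (triples i) + 2 * i"
proof (induction i)
  case 0
  then show ?case
    by (simp add: verts_def triples_def)
next
  case (Suc i)
  then show ?case
    using card_verts_Suc[of i] by simp
qed

lemma card_verts_ge: "k \<le> (card (verts k))\<^sup>2"
proof -
  have "k = card ((\<lambda>j. (\<alpha> j, \<beta> j)) ` {..<k})"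
    using pairs_inj by (simp add: card_image inj_on_def)
  also have "\<dots> \<le> card (verts k \<times> verts k)"
    using finite_verts by (intro card_mono) (auto simp: verts_def)
  finally show ?thesis
    by (simp add: card_cartesian_product power2_eq_square)
qed

lemma has_configuration_of_embedding:
  assumes "(e + s)\<^sup>2 \<le> k" and edges: "2 * k \<le> (\<Sum>j<k. card (B j)) + s"
  shows "has_configuration E (e + s + 3) e"
proof -
  have excess: "card (verts i) \<le> card (triples i) + s" if "i \<le> k" for i
  proof -
    have "(\<Sum>j<k. card (B j)) = (\<Sum>j<i. card (B j)) + (\<Sum>j=i..<k. card (B j))"
      using sum.atLeastLessThan_concat[OF le0 that, of "\<lambda>j. card (B j)"]
      by (simp add: atLeast0LessThan)
    also have "(\<Sum>j=i..<k. card (B j)) \<le> (\<Sum>j=i..<k. 2)"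
      using card_B by (intro sum_mono) auto
    finally have "2 * i \<le> (\<Sum>j<i. card (B j)) + s"
      using edges that by (simp add: diff_mult_distrib2)
    then show ?thesis
      using card_verts_le[OF that] by linarith
  qed
  have "e + s \<le> card (verts k)"
    using power2_le_imp_le[OF order_trans[OF assms(1) card_verts_ge]] by simp
  then have "e \<le> card (triples k)"
    using excess[of k] by linarith
  then have "has_configuration (triples k) (e + s + 4 - 1) e"
  proof (rule has_configuration_of_chain[where F = triples, rotated -1])
    show "triples 0 = {}"
      by (simp add: triples_def)
    show "triples i \<subseteq> triples (Suc i)" for i
      by (auto simp: triples_Suc)
    show "card (triples (Suc i)) \<le> card (triples i) + 4" if "i < k" for i
      using card_triples_Suc_le[OF that] .
    show "finite (\<Union>(triples i))" for i
      using finite_verts Union_triples_subset by (rule finite_subset[rotated])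
    show "card (\<Union>(triples i)) \<le> card (triples i) + s" if "i \<le> k" for i
      using card_mono[OF finite_verts[of i] Union_triples_subset[of i]] excess[OF that] by linarith
  qed
  then show ?thesis
    using triples_subset[of k] by (auto intro: has_configuration_mono)
qed

end

section \<open>The pair graph of a linear 3-graph\<close>

lemma triple_Min_Max:
  fixes T :: "'a::linorder set"
  assumes "card T = 3" "x \<in> T"
  shows "T = {Min (T - {x}), Max (T - {x}), x}" "Min (T - {x}) < Max (T - {x})"
    "x \<noteq> Min (T - {x})" "x \<noteq> Max (T - {x})"
proof -
  have "card (T - {x}) = 2"
    using assms by (simp add: card_ge_0_finite)
  then obtain p q where pq: "T - {x} = {p, q}" "p < q"
    by (auto simp: card_2_iff neq_iff)
  then have "Min (T - {x}) = p" "Max (T - {x}) = q"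
    by auto
  with pq \<open>x \<in> T\<close> show "T = {Min (T - {x}), Max (T - {x}), x}" "Min (T - {x}) < Max (T - {x})"
    "x \<noteq> Min (T - {x})" "x \<noteq> Max (T - {x})"
    by auto
qed

lemma pair_code_less:
  fixes a b c d n :: nat
  assumes "a < c" "b < n"
  shows "a * n + b < c * n + d"
proof -
  have "a * n + b < (a + 1) * n"
    using assms(2) by simp
  also have "\<dots> \<le> c * n"
    using assms(1) by (intro mult_right_mono) auto
  finally show ?thesis
    by simp
qed

lemma pair_code_less_square:
  fixes a b n :: nat
  assumes "a < n" "b < n"
  shows "a * n + b < n\<^sup>2"
  using pair_code_less[OF assms(1) assms(2), of 0] by (simp add: power2_eq_square)

lemma pair_code_div_mod:
  fixes a b n :: nat
  assumes "b < n"
  shows "(a * n + b) div n = a" "(a * n + b) mod n = b"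
  using assms by simp_all

lemma pair_code_inj:
  fixes a b a' b' n :: nat
  assumes "b < n" "b' < n" "a * n + b = a' * n + b'"
  shows "a = a'" "b = b'"
  using pair_code_div_mod[OF assms(1), of a] pair_code_div_mod[OF assms(2), of a'] assms(3)
  by simp_all

definition pointed_pairs :: "'a set set \<Rightarrow> ('a \<times> 'a set \<times> 'a set) set" where
  "pointed_pairs E = {(x, T1, T2). T1 \<in> E \<and> T2 \<in> E \<and> T1 \<noteq> T2 \<and> x \<in> T1 \<and> x \<in> T2}"

text \<open>The vertex \<open>a * n + b\<close> of the pair graph stands for the pair \<open>(a, b)\<close> of vertices of
  the hypergraph. Two distinct triples \<open>{a, c, x}\<close> and \<open>{b, d, x}\<close> with \<open>a < c\<close>, \<open>b < d\<close> give
  the edge between \<open>(a, b)\<close> and \<open>(c, d)\<close>.\<close>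

definition pair_edge :: "nat \<Rightarrow> nat \<times> nat set \<times> nat set \<Rightarrow> nat set" where
  "pair_edge n = (\<lambda>(x, T1, T2). {Min (T1 - {x}) * n + Min (T2 - {x}), Max (T1 - {x}) * n + Max (T2 - {x})})"

definition pair_graph :: "nat \<Rightarrow> nat set set \<Rightarrow> nat set set" where
  "pair_graph n E = pair_edge n ` pointed_pairs E"

lemma pair_edge_shape:
  assumes "hypergraph3_on {..<n} E" "(x, T1, T2) \<in> pointed_pairs E"
  obtains a b c d where "pair_edge n (x, T1, T2) = {a * n + b, c * n + d}"
    "T1 = {a, c, x}" "T2 = {b, d, x}" "a < c" "b < d" "a < n" "b < n" "c < n" "d < n"
    "x \<noteq> a" "x \<noteq> c"
proof -
  have T: "T1 \<in> E" "T2 \<in> E" "x \<in> T1" "x \<in> T2"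
    using assms(2) by (auto simp: pointed_pairs_def)
  then have "card T1 = 3" "card T2 = 3" "T1 \<subseteq> {..<n}" "T2 \<subseteq> {..<n}"
    using assms(1) by (auto simp: hypergraph3_on_def)
  with T triple_Min_Max[of T1 x] triple_Min_Max[of T2 x] show ?thesis
    by (intro that[of "Min (T1 - {x})" "Min (T2 - {x})" "Max (T1 - {x})" "Max (T2 - {x})"])
      (auto simp: pair_edge_def)
qed

lemma graph_on_pair_graph:
  assumes "hypergraph3_on {..<n} E"
  shows "graph_on {..<n\<^sup>2} (pair_graph n E)"
  unfolding graph_on_def pair_graph_def
proof
  fix \<epsilon> assume "\<epsilon> \<in> pair_edge n ` pointed_pairs E"
  then obtain x T1 T2 where "(x, T1, T2) \<in> pointed_pairs E" "\<epsilon> = pair_edge n (x, T1, T2)"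
    by auto
  then show "\<epsilon> \<subseteq> {..<n\<^sup>2} \<and> card \<epsilon> = 2"
    using assms pair_code_less pair_code_less_square
    by (elim pair_edge_shape) (auto simp: less_not_refl3)
qed

lemma pair_graph_edge:
  assumes "hypergraph3_on {..<n} E" "{w, w'} \<in> pair_graph n E"
  shows "\<exists>x. {w div n, w' div n, x} \<in> E \<and> {w mod n, w' mod n, x} \<in> E
    \<and> {w div n, w' div n, x} \<noteq> {w mod n, w' mod n, x}"
proof -
  obtain x T1 T2 where T: "(x, T1, T2) \<in> pointed_pairs E" "{w, w'} = pair_edge n (x, T1, T2)"
    using assms(2) by (auto simp: pair_graph_def)
  then have "T1 \<in> E" "T2 \<in> E" "T1 \<noteq> T2"
    by (auto simp: pointed_pairs_def)
  obtain a b c d where abcd: "{w, w'} = {a * n + b, c * n + d}"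
    "T1 = {a, c, x}" "T2 = {b, d, x}" "b < n" "d < n"
    using pair_edge_shape[OF assms(1) T(1)] T(2) by metis
  then have "{w div n, w' div n, x} = T1 \<and> {w mod n, w' mod n, x} = T2"
    by (auto simp: doubleton_eq_iff insert_commute)
  with \<open>T1 \<in> E\<close> \<open>T2 \<in> E\<close> \<open>T1 \<noteq> T2\<close> show ?thesis
    by blast
qed

lemma inj_on_pair_edge:
  assumes "hypergraph3_on {..<n} E" "linear_hypergraph E"
  shows "inj_on (pair_edge n) (pointed_pairs E)"
proof (rule inj_onI)
  fix p p' assume p: "p \<in> pointed_pairs E" and p': "p' \<in> pointed_pairs E"
    and eq: "pair_edge n p = pair_edge n p'"
  obtain x T1 T2 x' T1' T2' where pp': "p = (x, T1, T2)" "p' = (x', T1', T2')"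
    by (cases p, cases p') auto
  obtain a b c d where abcd: "pair_edge n p = {a * n + b, c * n + d}"
    "T1 = {a, c, x}" "T2 = {b, d, x}" "a < c" "b < n" "d < n" "x \<noteq> a" "x \<noteq> c"
    using pair_edge_shape[OF assms(1) p[unfolded pp'(1)]] pp'(1) by metis
  obtain a' b' c' d' where abcd': "pair_edge n p' = {a' * n + b', c' * n + d'}"
    "T1' = {a', c', x'}" "T2' = {b', d', x'}" "a' < c'" "b' < n" "d' < n" "x' \<noteq> a'" "x' \<noteq> c'"
    using pair_edge_shape[OF assms(1) p'[unfolded pp'(2)]] pp'(2) by metis
  have "a * n + b < c * n + d" "a' * n + b' < c' * n + d'"
    using abcd abcd' by (simp_all add: pair_code_less)
  then have "a * n + b = a' * n + b' \<and> c * n + d = c' * n + d'"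
    using eq abcd(1) abcd'(1) by (auto simp: doubleton_eq_iff)
  then have same: "a = a'" "b = b'" "c = c'" "d = d'"
    using pair_code_inj abcd(5,6) abcd'(5,6) by blast+
  have "T1 = T1'"
    using p p' abcd(2,4) abcd'(2) same(1,3) pp' assms(1)
    by (intro linear_hypergraph_eqI[OF assms(2), of _ _ a c])
      (auto simp: pointed_pairs_def hypergraph3_on_def card_ge_0_finite)
  then have "x = x'"
    using abcd(2,7,8) abcd'(2,7,8) same(1,3) by auto
  then show "p = p'"
    using pp' abcd(3) abcd'(3) same(2,4) \<open>T1 = T1'\<close> by simp
qed

lemma hypergraph3_on_finite:
  fixes n :: nat
  shows "hypergraph3_on {..<n} E \<Longrightarrow> finite E"
  by (rule finite_subset[of _ "Pow {..<n}"]) (auto simp: hypergraph3_on_def)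

lemma sum_degrees:
  fixes n :: nat
  assumes "hypergraph3_on {..<n} E"
  shows "(\<Sum>x<n. card {T\<in>E. x \<in> T}) = 3 * card E"
proof (rule sum_multicount)
  have "{x\<in>{..<n}. x \<in> T} = T \<and> card T = 3" if "T \<in> E" for T
    using assms that by (auto simp: hypergraph3_on_def)
  then show "\<forall>T\<in>E. card {x\<in>{..<n}. x \<in> T} = 3"
    by simp
qed (use hypergraph3_on_finite[OF assms] in auto)

lemma card_pointed_pairs:
  fixes n :: nat
  assumes "hypergraph3_on {..<n} E"
  shows "card (pointed_pairs E) = (\<Sum>x<n. card {T\<in>E. x \<in> T} * (card {T\<in>E. x \<in> T} - 1))"
proof -
  define S where "S x = {T\<in>E. x \<in> T}" for x
  have finite_S: "finite (S x)" for x
    using hypergraph3_on_finite[OF assms] by (simp add: S_def)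
  have "pointed_pairs E = (SIGMA x:{..<n}. S x \<times> S x - (\<lambda>T. (T, T)) ` S x)"
    using assms by (auto simp: pointed_pairs_def S_def hypergraph3_on_def)
  then have "card (pointed_pairs E) = (\<Sum>x<n. card (S x \<times> S x - (\<lambda>T. (T, T)) ` S x))"
    using finite_S by simp
  also have "\<dots> = (\<Sum>x<n. card (S x) * (card (S x) - 1))"
    using finite_S
    by (intro sum.cong refl, subst card_Diff_subset)
      (auto simp: card_image inj_on_def card_cartesian_product diff_mult_distrib2)
  finally show ?thesis
    by (simp add: S_def)
qed

lemma sum_ordered_pairs_ge:
  fixes d :: "'a \<Rightarrow> nat"
  shows "(\<Sum>x\<in>A. real (d x))\<^sup>2 / card A - (\<Sum>x\<in>A. real (d x)) \<le> real (\<Sum>x\<in>A. d x * (d x - 1))"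
proof -
  have "real (d x * (d x - 1)) = (real (d x))\<^sup>2 - real (d x)" for x
    by (cases "d x") (simp_all add: power2_eq_square algebra_simps)
  then have "real (\<Sum>x\<in>A. d x * (d x - 1)) = (\<Sum>x\<in>A. (real (d x))\<^sup>2) - (\<Sum>x\<in>A. real (d x))"
    by (simp add: sum_subtractf)
  moreover have "(\<Sum>x\<in>A. real (d x))\<^sup>2 / card A \<le> (\<Sum>x\<in>A. (real (d x))\<^sup>2)"
  proof (cases "card A = 0")
    case True
    then show ?thesis
      by (simp add: sum_nonneg)
  next
    case False
    then show ?thesis
      using sum_squared_le_sum_of_squares[of "\<lambda>x. real (d x)" A] by (simp add: pos_divide_le_eq)
  qed
  ultimately show ?thesis
    by linarith
qed

lemma cube_le_square_div_sub:
  fixes \<gamma> N M :: real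
  assumes "0 < \<gamma>" "1 \<le> \<gamma> * N" "\<gamma> * N\<^sup>2 \<le> M"
  shows "\<gamma>\<^sup>2 * N ^ 3 \<le> (3 * M)\<^sup>2 / N - 3 * M"
proof -
  have "0 < \<gamma> * N"
    using assms(2) by simp
  then have "0 < N"
    using assms(1) by (simp add: zero_less_mult_iff)
  have "0 \<le> \<gamma> * N\<^sup>2"
    using assms(1) by simp
  then have "0 \<le> M"
    using assms(3) by linarith
  have "\<gamma> * N \<le> M / N"
    using assms(3) \<open>0 < N\<close> by (simp add: pos_le_divide_eq power2_eq_square mult.assoc)
  then have "2 * \<gamma> * N \<le> 3 * M / N - 1"
    using assms(2) by simp
  have "\<gamma>\<^sup>2 * N ^ 3 \<le> (3 * (\<gamma> * N\<^sup>2)) * (2 * \<gamma> * N)"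
    using assms(1) \<open>0 < N\<close> by (simp add: power2_eq_square power3_eq_cube)
  also have "\<dots> \<le> (3 * M) * (3 * M / N - 1)"
    using assms \<open>2 * \<gamma> * N \<le> 3 * M / N - 1\<close> \<open>0 < N\<close> \<open>0 \<le> M\<close> by (intro mult_mono) auto
  also have "\<dots> = (3 * M)\<^sup>2 / N - 3 * M"
    using \<open>0 < N\<close> by (simp add: field_simps power2_eq_square)
  finally show ?thesis .
qed

lemma card_pair_graph_ge:
  fixes n :: nat and \<gamma> :: real
  assumes hyp: "hypergraph3_on {..<n} E" and "linear_hypergraph E"
    and "0 < \<gamma>" "1 \<le> \<gamma> * n" "\<gamma> * (real n)\<^sup>2 \<le> card E"
  shows "\<gamma>\<^sup>2 * real (n\<^sup>2) powr (3/2) \<le> card (pair_graph n E)"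
proof -
  let ?d = "\<lambda>x. card {T\<in>E. x \<in> T}"
  have "real (n\<^sup>2) powr (3/2) = real n ^ 3"
  proof (cases "n = 0")
    case True
    then show ?thesis
      by simp
  next
    case False
    then have "real (n\<^sup>2) powr (3/2) = (real n powr 2) powr (3/2)"
      by (simp add: powr_numeral)
    also have "\<dots> = real n powr (2 * (3/2))"
      by (rule powr_powr)
    also have "\<dots> = real n ^ 3"
      using False by (simp add: powr_numeral)
    finally show ?thesis .
  qed
  have "(\<Sum>x<n. real (?d x)) = 3 * real (card E)"
    using sum_degrees[OF hyp] by (metis of_nat_mult of_nat_numeral of_nat_sum)
  then have "(3 * real (card E))\<^sup>2 / n - 3 * real (card E) \<le> real (\<Sum>x<n. ?d x * (?d x - 1))"
    using sum_ordered_pairs_ge[of ?d "{..<n}"] by simp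
  also have "(\<Sum>x<n. ?d x * (?d x - 1)) = card (pair_graph n E)"
    unfolding pair_graph_def using card_pointed_pairs[OF hyp]
    by (simp add: card_image inj_on_pair_edge[OF assms(1,2)])
  finally show ?thesis
    using cube_le_square_div_sub[OF assms(3-5)] \<open>real (n\<^sup>2) powr (3/2) = real n ^ 3\<close> by simp
qed

lemma card_edges_eq_sum_back_degrees:
  fixes k :: nat
  assumes \<sigma>: "bij_betw \<sigma> {..<k} V" and "graph_on V H"
  shows "card H = (\<Sum>j<k. card {l. l < j \<and> {\<sigma> j, \<sigma> l} \<in> H})"
proof -
  define B where "B j = {l. l < j \<and> {\<sigma> j, \<sigma> l} \<in> H}" for j
  let ?edge = "\<lambda>(j, l). {\<sigma> j, \<sigma> l}"
  have finite_B: "finite (B j)" for j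
    by (rule finite_subset[of _ "{..<j}"]) (auto simp: B_def)
  have inj_\<sigma>: "\<sigma> j = \<sigma> l \<Longrightarrow> j < k \<Longrightarrow> l < k \<Longrightarrow> j = l" for j l
    using \<sigma> by (auto simp: bij_betw_def inj_on_def)
  have "inj_on ?edge (SIGMA j:{..<k}. B j)"
  proof (rule inj_onI, clarify)
    fix j l j' l'
    assume "j < k" "l \<in> B j" "j' < k" "l' \<in> B j'" "{\<sigma> j, \<sigma> l} = {\<sigma> j', \<sigma> l'}"
    then show "j = j' \<and> l = l'"
      using inj_\<sigma> unfolding B_def doubleton_eq_iff by (smt (verit) less_trans mem_Collect_eq order.asym)
  qed
  moreover have "?edge ` (SIGMA j:{..<k}. B j) = H"
  proof
    show "?edge ` (SIGMA j:{..<k}. B j) \<subseteq> H"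
      by (auto simp: B_def)
  next
    show "H \<subseteq> ?edge ` (SIGMA j:{..<k}. B j)"
    proof
      fix \<epsilon> assume "\<epsilon> \<in> H"
      then obtain u v where "\<epsilon> = {u, v}" "u \<noteq> v" "u \<in> V" "v \<in> V"
        using \<open>graph_on V H\<close> by (auto simp: graph_on_def card_2_iff)
      then obtain p q where pq: "\<epsilon> = {\<sigma> p, \<sigma> q}" "p < k" "q < k" "p \<noteq> q"
        using \<sigma> unfolding bij_betw_def by (metis imageE lessThan_iff)
      then consider "q < p" | "p < q"
        by linarith
      then show "\<epsilon> \<in> ?edge ` (SIGMA j:{..<k}. B j)"
      proof cases
        case 1
        then show ?thesis
          using pq \<open>\<epsilon> \<in> H\<close> by (force simp: B_def)
      next
        case 2
        then show ?thesis
          using pq \<open>\<epsilon> \<in> H\<close> by (force simp: B_def insert_commute)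
      qed
    qed
  qed
  ultimately have "card H = card (SIGMA j:{..<k}. B j)"
    using card_image by fastforce
  then show ?thesis
    using finite_B by (simp add: B_def)
qed

lemma has_configuration_of_pair_graph_copy:
  fixes E :: "nat set set" and t :: int
  assumes hyp: "hypergraph3_on {..<n} E" and linear: "linear_hypergraph E"
    and H: "H \<in> H_family k t" and copy: "contains_copy {..<k} H {..<n\<^sup>2} (pair_graph n E)"
    and k: "(e + nat t)\<^sup>2 \<le> k"
  shows "has_configuration E (e + nat t + 3) e"
proof -
  obtain f where f: "inj_on f {..<k}" "\<And>\<epsilon>. \<epsilon> \<in> H \<Longrightarrow> f ` \<epsilon> \<in> pair_graph n E"
    using copy unfolding contains_copy_def by blast
  have graph: "graph_on {..<k} H" and card_H: "int (card H) = 2 * int k - t"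
    and "two_degenerate {..<k} H"
    using H unfolding H_family_def by auto
  then obtain \<sigma> where \<sigma>: "bij_betw \<sigma> {..<k} {..<k}"
    and degenerate: "\<And>i. i < k \<Longrightarrow> card {j. j < i \<and> {\<sigma> i, \<sigma> j} \<in> H} \<le> 2"
    unfolding two_degenerate_def by auto
  define B where "B j = {l. l < j \<and> {\<sigma> j, \<sigma> l} \<in> H}" for j
  define w where "w j = f (\<sigma> j)" for j
  define P where "P j l y \<longleftrightarrow> {w j div n, w l div n, y} \<in> E \<and> {w j mod n, w l mod n, y} \<in> E
    \<and> {w j div n, w l div n, y} \<noteq> {w j mod n, w l mod n, y}" for j l y
  define x where "x j l = (SOME y. P j l y)" for j l
  have P: "P j l (x j l)" if "l \<in> B j" for j l
  proof -
    have "{w j, w l} \<in> pair_graph n E"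
      using f(2)[of "{\<sigma> j, \<sigma> l}"] that by (simp add: B_def w_def)
    then have "\<exists>y. P j l y"
      unfolding P_def by (rule pair_graph_edge[OF hyp])
    then show ?thesis
      unfolding x_def by (rule someI_ex)
  qed
  interpret pair_embedding E k B "\<lambda>j. w j div n" "\<lambda>j. w j mod n" x
  proof
    show "T \<in> E \<Longrightarrow> card T = 3" for T
      using hyp by (simp add: hypergraph3_on_def)
    show "B j \<subseteq> {..<j}" for j
      by (auto simp: B_def)
    show "card (B j) \<le> 2" if "j < k" for j
      using degenerate[OF that] by (simp add: B_def)
    show "j = l" if "j < k" "l < k" "w j div n = w l div n" "w j mod n = w l mod n" for j l
    proof -
      have "f (\<sigma> j) = f (\<sigma> l)"
        using that(3,4) div_mult_mod_eq[of "w j" n] div_mult_mod_eq[of "w l" n] unfolding w_def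
        by metis
      moreover have "\<sigma> j < k" "\<sigma> l < k"
        using \<sigma> that(1,2) by (auto dest: bij_betwE)
      ultimately have "\<sigma> j = \<sigma> l"
        using f(1) by (auto simp: inj_on_def)
      then show "j = l"
        using \<sigma> that(1,2) by (auto simp: bij_betw_def inj_on_def)
    qed
  qed (use linear P in \<open>simp_all add: P_def\<close>)
  have "card H = (\<Sum>j<k. card (B j))"
    unfolding B_def by (rule card_edges_eq_sum_back_degrees[OF \<sigma> graph])
  then have "2 * k \<le> (\<Sum>j<k. card (B j)) + nat t"
    using card_H by linarith
  then show ?thesis
    by (rule has_configuration_of_embedding[OF k])
qed

section \<open>Dense 3-graphs contain configurations\<close>

definition forces_H_family :: "nat \<Rightarrow> int \<Rightarrow> real \<Rightarrow> nat \<Rightarrow> bool" where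
  "forces_H_family k t c n \<longleftrightarrow>
    (\<forall>G. graph_on {..<n} G \<and> c * real n powr (3/2) \<le> real (card G) \<longrightarrow>
      (\<exists>H\<in>H_family k t. contains_copy {..<k} H {..<n} G))"

lemma statement_A_iff:
  "statement_A \<longleftrightarrow> (\<exists>t k0. \<forall>k\<ge>k0. \<forall>c>0. \<exists>n0. \<forall>n\<ge>n0. forces_H_family k t c n)"
  by (simp add: statement_A_def forces_H_family_def)

lemma has_configuration_of_dense_linear:
  fixes n :: nat and \<gamma> :: real and t :: int
  assumes "forces_H_family k t (\<gamma>\<^sup>2) (n\<^sup>2)" "(e + nat t)\<^sup>2 \<le> k"
    and "0 < \<gamma>" "1 \<le> \<gamma> * n"
    and hyp: "hypergraph3_on {..<n} E" and linear: "linear_hypergraph E"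
    and "\<gamma> * (real n)\<^sup>2 \<le> card E"
  shows "has_configuration E (e + nat t + 3) e"
proof -
  have "graph_on {..<n\<^sup>2} (pair_graph n E)"
    by (rule graph_on_pair_graph[OF hyp])
  moreover have "\<gamma>\<^sup>2 * real (n\<^sup>2) powr (3/2) \<le> card (pair_graph n E)"
    by (rule card_pair_graph_ge[OF hyp linear assms(3,4,7)])
  ultimately obtain H where "H \<in> H_family k t" "contains_copy {..<k} H {..<n\<^sup>2} (pair_graph n E)"
    using assms(1) unfolding forces_H_family_def by blast
  then show ?thesis
    by (rule has_configuration_of_pair_graph_copy[OF hyp linear _ _ assms(2)])
qed

lemma has_configuration_of_dense:
  fixes n :: nat and \<gamma> :: real and t :: int
  assumes "forces_H_family k t (\<gamma>\<^sup>2) (n\<^sup>2)" "(e + nat t)\<^sup>2 \<le> k"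
    and "0 < \<gamma>" "1 \<le> \<gamma> * n"
    and hyp: "hypergraph3_on {..<n} E" and dense: "3 * e * \<gamma> * (real n)\<^sup>2 \<le> card E"
  shows "has_configuration E (e + nat t + 3) e"
proof -
  have triples: "\<And>T. T \<in> E \<Longrightarrow> card T = 3"
    using hyp by (simp add: hypergraph3_on_def)
  show ?thesis
  proof (cases "\<forall>p q. p \<noteq> q \<longrightarrow> codegree E p q < e")
    case True
    then obtain M where M: "M \<subseteq> E" "linear_hypergraph M" "card E \<le> 3 * e * card M"
      using exists_large_linear_subhypergraph[OF hypergraph3_on_finite[OF hyp] triples, of e]
      by (auto intro: less_imp_le)
    have "0 < e"
      using True[rule_format, of 0 1] by simp
    have "real (card E) \<le> real (3 * e * card M)"
      using M(3) by (simp only: of_nat_le_iff)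
    then have "3 * e * (\<gamma> * (real n)\<^sup>2) \<le> 3 * e * real (card M)"
      using dense by (simp add: mult.assoc)
    then have "\<gamma> * (real n)\<^sup>2 \<le> card M"
      using \<open>0 < e\<close> by (simp add: mult_le_cancel_left_pos)
    moreover have "hypergraph3_on {..<n} M"
      using hyp M(1) by (auto simp: hypergraph3_on_def)
    ultimately have "has_configuration M (e + nat t + 3) e"
      using has_configuration_of_dense_linear[OF assms(1-4) _ M(2)] by blast
    then show ?thesis
      by (rule has_configuration_mono) (use M(1) in simp_all)
  next
    case False
    then obtain p q where "p \<noteq> q" "e \<le> codegree E p q"
      by (auto simp: not_less)
    then have "has_configuration E (e + 2) e"
      using has_configuration_codegree[of E] triples by blast
    then show ?thesis
      by (rule has_configuration_mono) simp_all
  qed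
qed

lemma eventually_has_configuration:
  fixes t :: int
  assumes A: "\<forall>k\<ge>k0. \<forall>c>0. \<exists>n0. \<forall>n\<ge>n0. forces_H_family k t c n" and "0 < e" "0 < c"
  shows "\<exists>n0. \<forall>n\<ge>n0. \<forall>E. hypergraph3_on {..<n} E \<and> c * (real n)\<^sup>2 \<le> real (card E) \<longrightarrow>
    has_configuration E (e + nat t + 3) e"
proof -
  define k where "k = max k0 ((e + nat t)\<^sup>2)"
  define \<gamma> where "\<gamma> = c / (3 * e)"
  have "0 < \<gamma>" "3 * e * \<gamma> = c"
    using \<open>0 < e\<close> \<open>0 < c\<close> by (simp_all add: \<gamma>_def)
  obtain n1 where n1: "\<forall>n\<ge>n1. forces_H_family k t (\<gamma>\<^sup>2) n"
    using A[rule_format, of k "\<gamma>\<^sup>2"] \<open>0 < \<gamma>\<close> by (auto simp: k_def)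
  show ?thesis
  proof (intro exI[of _ "max n1 (nat \<lceil>1 / \<gamma>\<rceil>)"] allI impI, elim conjE)
    fix n E assume n: "max n1 (nat \<lceil>1 / \<gamma>\<rceil>) \<le> n"
      and E: "hypergraph3_on {..<n} E" "c * (real n)\<^sup>2 \<le> real (card E)"
    have "1 / \<gamma> \<le> real n"
      using n by linarith
    then have "1 \<le> \<gamma> * n"
      using \<open>0 < \<gamma>\<close> by (simp add: divide_le_eq mult.commute)
    have "n1 \<le> n\<^sup>2"
      using n le_square[of n] unfolding power2_eq_square by linarith
    then show "has_configuration E (e + nat t + 3) e"
      using E \<open>3 * e * \<gamma> = c\<close> \<open>0 < \<gamma>\<close> \<open>1 \<le> \<gamma> * n\<close> n1
      by (intro has_configuration_of_dense[where k = k and \<gamma> = \<gamma>]) (simp_all add: k_def)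
  qed
qed

theorem theorem1p4:
  assumes "statement_A"
  shows "statement_B"
proof -
  obtain t k0 where A: "\<forall>k\<ge>k0. \<forall>c>0. \<exists>n0. \<forall>n\<ge>n0. forces_H_family k t c n"
    using assms unfolding statement_A_iff by blast
  show ?thesis
    unfolding statement_B_def
  proof (rule exI[of _ "nat t + 3"], intro allI impI)
    fix e :: nat and c :: real
    assume "3 \<le> e" "0 < c"
    then show "\<exists>n0. \<forall>n\<ge>n0. \<forall>E. hypergraph3_on {..<n} E \<and> c * (real n)\<^sup>2 \<le> real (card E) \<longrightarrow>
        has_configuration E (e + (nat t + 3)) e"
      using eventually_has_configuration[OF A, of e c] by (simp add: add.assoc)
  qed
qed

end
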